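(* Let $\mathcal{M}$ be a monotone gridding matrix such that the cell graph $G_\mathcal{M}$ contains a path on $k$ vertices. Then there exists a permutation $\pi\in\mathrm{Grid}(\mathcal{M})$ whose grid-width is at least $k/4$.
   Context: $\mathrm{Inc}$ and $\mathrm{Dec}$ denote the classes of increasing and decreasing permutations. A monotone gridding matrix $\mathcal{M}$ is a $k'\times\ell'$ matrix with entries in $\{\mathrm{Inc},\mathrm{Dec},\emptyset\}$ (columns left to right, rows bottom to top). An $\mathcal{M}$-gridding of a permutation $\pi$ of length $n$ (identified with its diagram $\{(i,\pi_i)\}$) consists of possibly empty disjoint integer intervals $I_1<\dots<I_{k'}$ and $J_1<\dots<J_{\ell'}$, each family with union $[n]$, such that the points in each cell $I_i\times J_j$ form a pattern in $\mathcal{M}_{i,j}$; $\mathrm{Grid}(\mathcal{M})$ is the class of permutations with an $\mathcal{M}$-gridding. The cell graph $G_\mathcal{M}$ has as vertices the cells with infinite entries, adjacent when they share a row or column and all cells strictly between them are finite or empty. The intervalicity of $A\subseteq[n]$ is the least number of disjoint integer intervals with union $A$; the grid-complexity of a point set is the maximum of the intervalicities of its two axis projections. A grid tree of $\pi$ is a rooted binary tree whose leaves are labeled bijectively by the points of $\pi$; its grid-width is the maximum over vertices $v$ of the grid-complexity of the leaf labels below $v$; the grid-width of $\pi$ is the minimum grid-width of a grid tree of $\pi$. *)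

theory Defs
  imports Complex_Main
begin

datatype cellclass = Inc | Dec | Emp

definition is_int :: "nat set \<Rightarrow> bool" where
  "is_int A \<equiv> \<exists>a b. A = {a..b}"

definition is_perm :: "nat \<Rightarrow> (nat \<Rightarrow> nat) \<Rightarrow> bool" where
  "is_perm n \<sigma> \<equiv> bij_betw \<sigma> {1..n} {1..n}"

definition diagram :: "nat \<Rightarrow> (nat \<Rightarrow> nat) \<Rightarrow> (nat \<times> nat) set" where
  "diagram n \<sigma> = (\<lambda>i. (i, \<sigma> i)) ` {1..n}"

definition interval_partition :: "nat \<Rightarrow> nat \<Rightarrow> (nat \<Rightarrow> nat set) \<Rightarrow> bool" where
  "interval_partition n m I \<equiv>
     (\<forall>i<m. is_int (I i)) \<and>
     (\<forall>i j. i < j \<and> j < m \<longrightarrow> (\<forall>x\<in>I i. \<forall>y\<in>I j. x < y)) \<and>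
     (\<Union>i<m. I i) = {1..n}"

definition cell_ok :: "cellclass \<Rightarrow> (nat \<times> nat) set \<Rightarrow> bool" where
  "cell_ok c P \<equiv> (case c of
      Inc \<Rightarrow> (\<forall>p\<in>P. \<forall>q\<in>P. fst p < fst q \<longrightarrow> snd p < snd q)
    | Dec \<Rightarrow> (\<forall>p\<in>P. \<forall>q\<in>P. fst p < fst q \<longrightarrow> snd p > snd q)
    | Emp \<Rightarrow> P = {})"

text \<open>M is a kc x lr matrix (columns i < kc, rows j < lr), entry M i j.\<close>
definition gridding ::
  "(nat \<Rightarrow> nat \<Rightarrow> cellclass) \<Rightarrow> nat \<Rightarrow> nat \<Rightarrow> nat \<Rightarrow> (nat \<Rightarrow> nat)
     \<Rightarrow> (nat \<Rightarrow> nat set) \<Rightarrow> (nat \<Rightarrow> nat set) \<Rightarrow> bool" where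
  "gridding M kc lr n \<sigma> I J \<equiv>
     interval_partition n kc I \<and> interval_partition n lr J \<and>
     (\<forall>i<kc. \<forall>j<lr. cell_ok (M i j) (diagram n \<sigma> \<inter> (I i \<times> J j)))"

definition Grid :: "(nat \<Rightarrow> nat \<Rightarrow> cellclass) \<Rightarrow> nat \<Rightarrow> nat \<Rightarrow> (nat \<times> (nat \<Rightarrow> nat)) set" where
  "Grid M kc lr = {(n, \<sigma>). is_perm n \<sigma> \<and> (\<exists>I J. gridding M kc lr n \<sigma> I J)}"

definition cg_vertex :: "(nat \<Rightarrow> nat \<Rightarrow> cellclass) \<Rightarrow> nat \<Rightarrow> nat \<Rightarrow> nat \<times> nat \<Rightarrow> bool" where
  "cg_vertex M kc lr v \<equiv> fst v < kc \<and> snd v < lr \<and> M (fst v) (snd v) \<noteq> Emp"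

definition cg_adj :: "(nat \<Rightarrow> nat \<Rightarrow> cellclass) \<Rightarrow> nat \<Rightarrow> nat \<Rightarrow> nat \<times> nat \<Rightarrow> nat \<times> nat \<Rightarrow> bool" where
  "cg_adj M kc lr v w \<equiv> cg_vertex M kc lr v \<and> cg_vertex M kc lr w \<and> v \<noteq> w \<and>
     ((fst v = fst w \<and> (\<forall>t. min (snd v) (snd w) < t \<and> t < max (snd v) (snd w) \<longrightarrow> M (fst v) t = Emp)) \<or>
      (snd v = snd w \<and> (\<forall>t. min (fst v) (fst w) < t \<and> t < max (fst v) (fst w) \<longrightarrow> M t (snd v) = Emp)))"

definition has_path :: "(nat \<Rightarrow> nat \<Rightarrow> cellclass) \<Rightarrow> nat \<Rightarrow> nat \<Rightarrow> nat \<Rightarrow> bool" where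
  "has_path M kc lr k \<equiv> \<exists>vs. length vs = k \<and> distinct vs \<and>
     (\<forall>v\<in>set vs. cg_vertex M kc lr v) \<and>
     (\<forall>t. Suc t < k \<longrightarrow> cg_adj M kc lr (vs ! t) (vs ! Suc t))"

definition intervalicity :: "nat set \<Rightarrow> nat" where
  "intervalicity A = (LEAST m. \<exists>f. (\<forall>i<m. is_int (f i)) \<and>
      (\<forall>i j. i < m \<and> j < m \<and> i \<noteq> j \<longrightarrow> f i \<inter> f j = {}) \<and> (\<Union>i<m. f i) = A)"

definition grid_complexity :: "(nat \<times> nat) set \<Rightarrow> nat" where
  "grid_complexity P = max (intervalicity (fst ` P)) (intervalicity (snd ` P))"

datatype gtree = Leaf "nat \<times> nat" | Node gtree gtree

fun leaves :: "gtree \<Rightarrow> (nat \<times> nat) list" where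
  "leaves (Leaf p) = [p]"
| "leaves (Node l r) = leaves l @ leaves r"

fun below_sets :: "gtree \<Rightarrow> (nat \<times> nat) set set" where
  "below_sets (Leaf p) = {{p}}"
| "below_sets (Node l r) = insert (set (leaves (Node l r))) (below_sets l \<union> below_sets r)"

definition is_grid_tree :: "nat \<Rightarrow> (nat \<Rightarrow> nat) \<Rightarrow> gtree \<Rightarrow> bool" where
  "is_grid_tree n \<sigma> T \<equiv> distinct (leaves T) \<and> set (leaves T) = diagram n \<sigma>"

definition tree_grid_width :: "gtree \<Rightarrow> nat" where
  "tree_grid_width T = Max (grid_complexity ` below_sets T)"

definition grid_width :: "nat \<Rightarrow> (nat \<Rightarrow> nat) \<Rightarrow> nat" where
  "grid_width n \<sigma> = Inf {tree_grid_width T | T. is_grid_tree n \<sigma> T}"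

end

theory Submission
  imports Defs "HOL-Library.Product_Lexorder"
begin

text \<open>
  Give each of the k cells of the path 3k points, its levels, and sort the points along each
  axis by line, then by maximal run of the path within that line, then by level (reversed where
  the cell requires it), then by position on the path. This is a gridded permutation of
  N = 3k^2 points in which level h of cell t and level h of cell t+1 are adjacent along the axis
  of the step from t to t+1. A grid tree has a vertex whose leaf set S contains between N/3 and
  2N/3 of the points. If S splits every cell of the path, each cell starts a run on some axis
  whose points occupy consecutive positions, so every cell contributes its own boundary of S.
  Otherwise some cell lies entirely inside or outside S; since both S and its complement have
  at least k^2 points, at least k levels change membership somewhere along the path, each at a
  boundary of S. A set of intervalicity c has at most 2c boundaries, so one of the projections
  of S has intervalicity at least k/4.\<close>

section \<open>Ranking a finite set by an injective key\<close>

definition rank :: "('p \<Rightarrow> 'k::linorder) \<Rightarrow> 'p set \<Rightarrow> 'p \<Rightarrow> nat" where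
  "rank key P p = Suc (card {q\<in>P. key q < key p})"

definition rank_block :: "'p set \<Rightarrow> ('p \<Rightarrow> 'g::linorder) \<Rightarrow> 'g \<Rightarrow> nat set" where
  "rank_block P g c = {Suc (card {q\<in>P. g q < c}) .. card {q\<in>P. g q \<le> c}}"

context
  fixes key :: "'p \<Rightarrow> 'k::linorder" and P :: "'p set"
  assumes finite_P: "finite P" and inj_key: "inj_on key P"
begin

lemma rank_less_rank_if_key_less:
  assumes "p \<in> P" "key p < key q"
  shows "rank key P p < rank key P q"
proof -
  have "{r\<in>P. key r < key p} \<subset> {r\<in>P. key r < key q}"
    using assms by auto
  then show ?thesis
    unfolding rank_def using finite_P by (simp add: psubset_card_mono)
qed

lemma rank_less_rank_iff:
  assumes "p \<in> P" "q \<in> P"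
  shows "rank key P p < rank key P q \<longleftrightarrow> key p < key q"
proof
  assume less: "rank key P p < rank key P q"
  have "key p \<noteq> key q"
    using less inj_onD[OF inj_key _ assms] by auto
  moreover have "\<not> key q < key p"
    using less rank_less_rank_if_key_less[OF assms(2), of p] by auto
  ultimately show "key p < key q" by simp
qed (rule rank_less_rank_if_key_less[OF assms(1)])

lemma bij_betw_rank: "bij_betw (rank key P) P {1..card P}"
proof -
  have inj: "inj_on (rank key P) P"
  proof (rule inj_onI)
    fix p q assume "p \<in> P" "q \<in> P" "rank key P p = rank key P q"
    then show "p = q"
      using rank_less_rank_iff inj_onD[OF inj_key] by (metis less_irrefl neqE)
  qed
  have "rank key P ` P \<subseteq> {1..card P}"
  proof
    fix x assume "x \<in> rank key P ` P"
    then obtain p where "p \<in> P" "x = rank key P p" by blast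
    moreover have "card {q\<in>P. key q < key p} < card P"
      using \<open>p \<in> P\<close> finite_P by (intro psubset_card_mono) auto
    ultimately show "x \<in> {1..card P}" unfolding rank_def by simp
  qed
  moreover have "card (rank key P ` P) = card {1..card P}"
    using card_image[OF inj] by simp
  ultimately show ?thesis
    using inj by (simp add: bij_betw_def card_subset_eq)
qed

lemma rank_Suc_if_covers:
  assumes "p \<in> P" "key p < key q" "\<forall>r\<in>P. \<not> (key p < key r \<and> key r < key q)"
  shows "rank key P q = Suc (rank key P p)"
proof -
  have "key r < key p \<or> r = p" if "r \<in> P" "key r < key q" for r
    using that assms inj_onD[OF inj_key, of r p] by (auto simp: not_less_iff_gr_or_eq)
  then have "{r\<in>P. key r < key q} = insert p {r\<in>P. key r < key p}"
    using assms by auto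
  then show ?thesis
    unfolding rank_def using finite_P assms(1) by simp
qed

context
  fixes g :: "'p \<Rightarrow> 'g::linorder"
  assumes mono_g: "\<forall>p\<in>P. \<forall>q\<in>P. key p < key q \<longrightarrow> g p \<le> g q"
begin

lemma rank_bounds_mono:
  assumes "p \<in> P"
  shows "card {q\<in>P. g q < g p} < rank key P p" "rank key P p \<le> card {q\<in>P. g q \<le> g p}"
proof -
  have "key q < key p" if "q \<in> P" "g q < g p" for q
  proof (rule ccontr)
    assume "\<not> key q < key p"
    then have "key p < key q \<or> p = q"
      using inj_onD[OF inj_key, of p q] assms that by (auto simp: not_less le_less)
    then show False
      using mono_g assms that by force
  qed
  then have "{q\<in>P. g q < g p} \<subseteq> {q\<in>P. key q < key p}"
    by blast
  then have "card {q\<in>P. g q < g p} \<le> card {q\<in>P. key q < key p}"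
    using finite_P by (intro card_mono) auto
  then show "card {q\<in>P. g q < g p} < rank key P p"
    unfolding rank_def by simp
  have "insert p {q\<in>P. key q < key p} \<subseteq> {q\<in>P. g q \<le> g p}"
    using assms mono_g by auto
  then have "card (insert p {q\<in>P. key q < key p}) \<le> card {q\<in>P. g q \<le> g p}"
    using finite_P by (intro card_mono) auto
  then show "rank key P p \<le> card {q\<in>P. g q \<le> g p}"
    unfolding rank_def using finite_P by simp
qed

lemma rank_less_rank_if_mono_less:
  assumes "p \<in> P" "q \<in> P" "g p < g q"
  shows "rank key P p < rank key P q"
proof -
  have "card {r\<in>P. g r \<le> g p} \<le> card {r\<in>P. g r < g q}"
    using finite_P assms(3) by (intro card_mono) auto
  then show ?thesis
    using rank_bounds_mono[OF assms(1)] rank_bounds_mono[OF assms(2)] by linarith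
qed

lemma rank_in_rank_block_iff:
  assumes "p \<in> P"
  shows "rank key P p \<in> rank_block P g c \<longleftrightarrow> g p = c"
proof
  assume "g p = c"
  then show "rank key P p \<in> rank_block P g c"
    using rank_bounds_mono[OF assms] unfolding rank_block_def by (simp add: Suc_le_eq)
next
  assume block: "rank key P p \<in> rank_block P g c"
  show "g p = c"
  proof (rule ccontr)
    assume "g p \<noteq> c"
    then consider "g p < c" | "c < g p" by fastforce
    then show False
    proof cases
      case 1
      then have "card {q\<in>P. g q \<le> g p} \<le> card {q\<in>P. g q < c}"
        using finite_P by (intro card_mono) auto
      then show False using rank_bounds_mono[OF assms] block unfolding rank_block_def by auto
    next
      case 2
      then have "card {q\<in>P. g q \<le> c} \<le> card {q\<in>P. g q < g p}"
        using finite_P by (intro card_mono) auto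
      then show False using rank_bounds_mono[OF assms] block unfolding rank_block_def by auto
    qed
  qed
qed

lemma mono_eq_if_rank_between:
  assumes "p \<in> P" "q \<in> P" "r \<in> P" "g p = g q"
    and "min (rank key P p) (rank key P q) \<le> rank key P r"
    and "rank key P r \<le> max (rank key P p) (rank key P q)"
  shows "g r = g p"
proof (cases "g r" "g p" rule: linorder_cases)
  case less
  then show ?thesis
    using rank_less_rank_if_mono_less[of r p] rank_less_rank_if_mono_less[of r q] assms by auto
next
  case greater
  then show ?thesis
    using rank_less_rank_if_mono_less[of p r] rank_less_rank_if_mono_less[of q r] assms by auto
qed

end

end

lemma interval_partition_rank_blocks:
  fixes key :: "'p \<Rightarrow> 'k::linorder" and g :: "'p \<Rightarrow> nat"
  assumes finite_P: "finite P" and inj_key: "inj_on key P"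
    and mono_g: "\<forall>p\<in>P. \<forall>q\<in>P. key p < key q \<longrightarrow> g p \<le> g q"
    and bounded: "\<forall>p\<in>P. g p < L"
  shows "interval_partition (card P) L (rank_block P g)"
  unfolding interval_partition_def
proof (intro conjI allI impI ballI)
  fix i show "is_int (rank_block P g i)"
    unfolding is_int_def rank_block_def by blast
next
  fix i j x y assume "i < j \<and> j < L" "x \<in> rank_block P g i" "y \<in> rank_block P g j"
  moreover have "card {p\<in>P. g p \<le> i} \<le> card {p\<in>P. g p < j}"
    using \<open>i < j \<and> j < L\<close> finite_P by (intro card_mono) auto
  ultimately show "x < y" unfolding rank_block_def by auto
next
  have "rank_block P g i \<subseteq> {1..card P}" for i
  proof -
    have "card {p\<in>P. g p \<le> i} \<le> card P"
      using finite_P by (intro card_mono) auto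
    then show ?thesis unfolding rank_block_def by auto
  qed
  moreover have "{1..card P} \<subseteq> (\<Union>i<L. rank_block P g i)"
  proof
    fix x assume "x \<in> {1..card P}"
    then obtain p where "p \<in> P" "x = rank key P p"
      using bij_betw_imp_surj_on[OF bij_betw_rank[OF finite_P inj_key]] by blast
    then show "x \<in> (\<Union>i<L. rank_block P g i)"
      using rank_in_rank_block_iff[OF finite_P inj_key mono_g] bounded by blast
  qed
  ultimately show "(\<Union>i<L. rank_block P g i) = {1..card P}" by blast
qed

section \<open>Boundaries and intervalicity\<close>

definition boundary :: "nat set \<Rightarrow> nat set" where
  "boundary X = {i. (i \<in> X) \<noteq> (Suc i \<in> X)}"

lemma intervalicity_witness:
  assumes "finite A"
  shows "\<exists>f. (\<forall>i<intervalicity A. is_int (f i)) \<and>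
    (\<forall>i j. i < intervalicity A \<and> j < intervalicity A \<and> i \<noteq> j \<longrightarrow> f i \<inter> f j = {}) \<and>
    (\<Union>i<intervalicity A. f i) = A"
  unfolding intervalicity_def
proof (rule LeastI)
  obtain h where h: "bij_betw h {..<card A} A"
    using ex_bij_betw_nat_finite[OF assms] by (auto simp: lessThan_atLeast0)
  show "\<exists>f. (\<forall>i<card A. is_int (f i)) \<and>
    (\<forall>i j. i < card A \<and> j < card A \<and> i \<noteq> j \<longrightarrow> f i \<inter> f j = {}) \<and> (\<Union>i<card A. f i) = A"
  proof (intro exI conjI allI impI)
    show "is_int {h i..h i}" for i
      unfolding is_int_def by blast
    show "{h i..h i} \<inter> {h j..h j} = {}" if "i < card A \<and> j < card A \<and> i \<noteq> j" for i j
      using that h by (auto simp: bij_betw_def inj_on_def)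
    show "(\<Union>i<card A. {h i..h i}) = A"
      using bij_betw_imp_surj_on[OF h] by auto
  qed
qed

lemma card_boundary_le_intervalicity:
  assumes "finite X"
  shows "card (boundary X) \<le> 2 * intervalicity X"
proof -
  define m where "m = intervalicity X"
  obtain f where f_int: "\<forall>l<m. is_int (f l)" and f_union: "(\<Union>l<m. f l) = X"
    using intervalicity_witness[OF assms] unfolding m_def by blast
  have "boundary X \<subseteq> (\<lambda>l. Max (f l)) ` {..<m} \<union> (\<lambda>l. Min (f l) - 1) ` {..<m}"
  proof
    fix i assume i: "i \<in> boundary X"
    show "i \<in> (\<lambda>l. Max (f l)) ` {..<m} \<union> (\<lambda>l. Min (f l) - 1) ` {..<m}"
    proof (cases "i \<in> X")
      case True
      then obtain l where l: "l < m" "i \<in> f l" using f_union by blast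
      obtain a b where ab: "f l = {a..b}" using f_int l(1) unfolding is_int_def by blast
      have "Suc i \<notin> f l" using i True l f_union unfolding boundary_def by blast
      then have "Max (f l) = i" using l(2) unfolding ab by (simp add: le_antisym)
      then show ?thesis using l(1) by blast
    next
      case False
      then obtain l where l: "l < m" "Suc i \<in> f l"
        using i f_union unfolding boundary_def by blast
      obtain a b where ab: "f l = {a..b}" using f_int l(1) unfolding is_int_def by blast
      have "i \<notin> f l" using False l f_union by blast
      then have "a = Suc i" "a \<le> b" using l(2) unfolding ab by auto
      moreover have "Min {a..b} = a"
        using \<open>a \<le> b\<close> by (intro Min_eqI) auto
      ultimately have "Min (f l) - 1 = i" unfolding ab by simp
      then show ?thesis using l(1) by (intro UnI2) (metis imageI lessThan_iff)
    qed
  qed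
  then have "card (boundary X) \<le> card ((\<lambda>l. Max (f l)) ` {..<m}) + card ((\<lambda>l. Min (f l) - 1) ` {..<m})"
    by (meson card_Un_le card_mono finite_UnI finite_imageI finite_lessThan le_trans)
  also have "\<dots> \<le> m + m"
    using card_image_le[of "{..<m}"] by (intro add_mono) fastforce+
  finally show ?thesis unfolding m_def by simp
qed

lemma finite_boundary:
  assumes "finite X"
  shows "finite (boundary X)"
proof (rule finite_subset)
  show "boundary X \<subseteq> X \<union> (\<lambda>i. i - 1) ` X"
    unfolding boundary_def by (auto intro: rev_image_eqI[of "Suc _"])
  show "finite (X \<union> (\<lambda>i. i - 1) ` X)"
    using assms by simp
qed

lemma card_boundaries_le_grid_complexity:
  assumes "finite S"
  shows "card (boundary (fst ` S)) + card (boundary (snd ` S)) \<le> 4 * grid_complexity S"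
  using card_boundary_le_intervalicity[of "fst ` S"] card_boundary_le_intervalicity[of "snd ` S"] assms
  unfolding grid_complexity_def by simp

lemma exists_change_upto:
  fixes f :: "nat \<Rightarrow> bool"
  assumes "a \<le> b" "f a \<noteq> f b"
  shows "\<exists>i. a \<le> i \<and> i < b \<and> f i \<noteq> f (Suc i)"
  using assms
proof (induction b)
  case (Suc b)
  show ?case
  proof (cases "f a = f b")
    case True
    with Suc.prems have "a \<le> b" "f b \<noteq> f (Suc b)"
      by (auto simp: le_Suc_eq)
    then show ?thesis by blast
  next
    case False
    with Suc.prems have "a \<le> b"
      by (auto simp: le_Suc_eq)
    then show ?thesis
      using Suc.IH False less_SucI by blast
  qed
qed simp

lemma exists_change_between:
  fixes f :: "nat \<Rightarrow> bool"
  assumes "f a \<noteq> f b"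
  obtains i where "min a b \<le> i" "i < max a b" "f i \<noteq> f (Suc i)"
proof (cases "a \<le> b")
  case True
  then show ?thesis
    using exists_change_upto[OF True assms] that by auto
next
  case False
  then show ?thesis
    using exists_change_upto[of b a f] assms that by auto
qed

section \<open>Grid trees\<close>

lemma leaves_in_below_sets: "set (leaves T) \<in> below_sets T"
  by (cases T) auto

lemma finite_below_sets: "finite (below_sets T)"
  by (induction T) auto

lemma below_sets_subset_leaves: "S \<in> below_sets T \<Longrightarrow> S \<subseteq> set (leaves T)"
  by (induction T) auto

lemma grid_complexity_le_tree_grid_width:
  "S \<in> below_sets T \<Longrightarrow> grid_complexity S \<le> tree_grid_width T"
  unfolding tree_grid_width_def using finite_below_sets by (intro Max_ge) auto

text \<open>Descend into the larger child while it still has more than 2N/3 leaves.\<close>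

lemma exists_balanced_below_set:
  assumes "distinct (leaves T)" "2 * N < 3 * length (leaves T)" "2 \<le> N"
  shows "\<exists>S\<in>below_sets T. N \<le> 3 * card S \<and> 3 * card S \<le> 2 * N"
  using assms
proof (induction T)
  case (Node l r)
  have "\<exists>S\<in>below_sets c. N \<le> 3 * card S \<and> 3 * card S \<le> 2 * N"
    if c: "c \<in> {l, r}" "N \<le> 3 * length (leaves c)" for c
  proof (cases "3 * length (leaves c) \<le> 2 * N")
    case True
    moreover have "card (set (leaves c)) = length (leaves c)"
      using c(1) Node.prems(1) by (auto intro: distinct_card)
    ultimately show ?thesis
      using c(2) leaves_in_below_sets[of c] by (intro bexI[of _ "set (leaves c)"]) auto
  next
    case False
    then show ?thesis using c Node by auto
  qed
  moreover have "N \<le> 3 * length (leaves l) \<or> N \<le> 3 * length (leaves r)"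
    using Node.prems(2) by (simp, linarith)
  ultimately show ?case by auto
qed simp

fun caterpillar :: "(nat \<times> nat) list \<Rightarrow> gtree" where
  "caterpillar [] = Leaf (0, 0)"
| "caterpillar [p] = Leaf p"
| "caterpillar (p # q # r) = Node (Leaf p) (caterpillar (q # r))"

lemma leaves_caterpillar: "xs \<noteq> [] \<Longrightarrow> leaves (caterpillar xs) = xs"
  by (induction xs rule: caterpillar.induct) auto

lemma grid_width_attained:
  assumes "diagram n \<sigma> \<noteq> {}"
  obtains T where "is_grid_tree n \<sigma> T" "grid_width n \<sigma> = tree_grid_width T"
proof -
  obtain xs where xs: "set xs = diagram n \<sigma>" "distinct xs"
    using finite_distinct_list[of "diagram n \<sigma>"] unfolding diagram_def by blast
  moreover have "xs \<noteq> []"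
    using assms xs(1) by auto
  ultimately have "is_grid_tree n \<sigma> (caterpillar xs)"
    unfolding is_grid_tree_def by (simp add: leaves_caterpillar)
  then have "Inf {tree_grid_width T | T. is_grid_tree n \<sigma> T} \<in> {tree_grid_width T | T. is_grid_tree n \<sigma> T}"
    by (intro Inf_nat_def1) blast
  then show ?thesis
    using that unfolding grid_width_def by blast
qed

section \<open>The permutation built along a path of the cell graph\<close>

lemma less_prod_imp_fst_le: "(x, y) < (x', y') \<Longrightarrow> x \<le> x'"
  for x x' :: "'a::linorder" and y y' :: "'b::linorder"
  by (auto simp: less_prod_def)

lemma less_prod_imp_prefix_le: "(x, y, z) < (x', y', z') \<Longrightarrow> (x, y) \<le> (x', y')"
  for x x' :: "'a::linorder" and y y' :: "'b::linorder" and z z' :: "'c::linorder"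
  by (auto simp: less_prod_def)

lemma no_prod_between_Suc: "(a, b, c, d) < x \<Longrightarrow> x < (a, b, c, Suc d) \<Longrightarrow> False"
  for a b c d :: nat
  by (cases x) (auto simp: less_prod_def)

definition mirror :: "nat \<Rightarrow> bool \<Rightarrow> nat \<Rightarrow> nat" where
  "mirror m d h = (if d then m - 1 - h else h)"

lemma mirror_less_mirror_iff:
  "h < m \<Longrightarrow> h' < m \<Longrightarrow> mirror m d h < mirror m d h' \<longleftrightarrow> (if d then h' < h else h < h')"
  unfolding mirror_def by auto

lemma mirror_inj: "h < m \<Longrightarrow> h' < m \<Longrightarrow> mirror m d h = mirror m d h' \<Longrightarrow> h = h'"
  unfolding mirror_def by (auto split: if_splits)

locale cell_path =
  fixes M :: "nat \<Rightarrow> nat \<Rightarrow> cellclass" and kc lr k :: nat and vs :: "(nat \<times> nat) list"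
  assumes length_vs: "length vs = k" and distinct_vs: "distinct vs"
    and vertex_vs: "\<forall>v\<in>set vs. cg_vertex M kc lr v"
    and adjacent_vs: "\<forall>t. Suc t < k \<longrightarrow> cg_adj M kc lr (vs ! t) (vs ! Suc t)"
begin

text \<open>
  An axis is encoded as a Boolean: True for the x-axis, whose lines are the columns, False for
  the y-axis, whose lines are the rows. The path steps from cell t to cell t+1 inside a line of
  axis vert t.\<close>

definition col :: "nat \<Rightarrow> nat" where "col t = fst (vs ! t)"
definition row :: "nat \<Rightarrow> nat" where "row t = snd (vs ! t)"
definition line :: "bool \<Rightarrow> nat \<Rightarrow> nat" where "line a t = (if a then col t else row t)"
definition lines :: "bool \<Rightarrow> nat" where "lines a = (if a then kc else lr)"
definition vert :: "nat \<Rightarrow> bool" where "vert t \<longleftrightarrow> col t = col (Suc t)"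
definition dec :: "nat \<Rightarrow> bool" where "dec t \<longleftrightarrow> M (col t) (row t) = Dec"

primrec run_start :: "bool \<Rightarrow> nat \<Rightarrow> nat" where
  "run_start a 0 = 0"
| "run_start a (Suc t) = (if vert t = a then run_start a t else Suc t)"

text \<open>
  flip a t tells whether the levels of cell t are listed in decreasing order along axis a. The two
  flips of a cell differ exactly when it is a Dec cell, and a step along axis a keeps the flip
  on that axis, which determines x_flip recursively.\<close>

primrec x_flip :: "nat \<Rightarrow> bool" where
  "x_flip 0 = False"
| "x_flip (Suc t) = (if vert t then x_flip t else (x_flip t \<noteq> dec t) \<noteq> dec (Suc t))"

definition flip :: "bool \<Rightarrow> nat \<Rightarrow> bool" where
  "flip a t = (if a then x_flip t else x_flip t \<noteq> dec t)"

definition levels :: nat where "levels = 3 * k"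
definition pts :: "(nat \<times> nat) set" where "pts = {0..<k} \<times> {0..<levels}"
definition N :: nat where "N = k * levels"

definition key :: "bool \<Rightarrow> nat \<times> nat \<Rightarrow> nat \<times> nat \<times> nat \<times> nat" where
  "key a p = (line a (fst p), run_start a (fst p), mirror levels (flip a (fst p)) (snd p), fst p)"

definition pos :: "bool \<Rightarrow> nat \<times> nat \<Rightarrow> nat" where "pos a = rank (key a) pts"
definition perm :: "nat \<Rightarrow> nat" where "perm i = pos False (inv_into pts (pos True) i)"

lemma vertex: "t < k \<Longrightarrow> cg_vertex M kc lr (vs ! t)"
  using vertex_vs length_vs by auto

lemma line_less_lines: "t < k \<Longrightarrow> line a t < lines a"
  using vertex unfolding cg_vertex_def line_def lines_def col_def row_def by auto

lemma cell_nonempty: "t < k \<Longrightarrow> M (col t) (row t) \<noteq> Emp"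
  using vertex unfolding cg_vertex_def col_def row_def by auto

lemma cell_unique: "t < k \<Longrightarrow> t' < k \<Longrightarrow> col t = col t' \<Longrightarrow> row t = row t' \<Longrightarrow> t = t'"
  using nth_eq_iff_index_eq[OF distinct_vs] length_vs unfolding col_def row_def
  by (metis prod.collapse)

lemma line_Suc: "Suc t < k \<Longrightarrow> line (vert t) (Suc t) = line (vert t) t"
  using adjacent_vs unfolding line_def vert_def col_def row_def cg_adj_def by auto

lemma run_start_self: "\<exists>a. run_start a t = t"
  by (cases t) (auto intro: exI[of _ "\<not> vert _"])

lemma flip_Suc: "vert t = a \<Longrightarrow> flip a (Suc t) = flip a t"
  unfolding flip_def by auto

lemma finite_pts: "finite pts"
  unfolding pts_def by simp

lemma card_pts: "card pts = N"
  unfolding pts_def N_def by simp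

lemma inj_key: "inj_on (key a) pts"
  by (rule inj_onI) (auto simp: key_def pts_def dest: mirror_inj)

lemma bij_betw_pos: "bij_betw (pos a) pts {1..N}"
  unfolding pos_def using bij_betw_rank[OF finite_pts inj_key] card_pts by simp

lemma pos_less_pos_iff: "p \<in> pts \<Longrightarrow> q \<in> pts \<Longrightarrow> pos a p < pos a q \<longleftrightarrow> key a p < key a q"
  unfolding pos_def by (rule rank_less_rank_iff[OF finite_pts inj_key])

lemma inv_pos: "p \<in> pts \<Longrightarrow> inv_into pts (pos a) (pos a p) = p"
  using bij_betw_imp_inj_on[OF bij_betw_pos] by (rule inv_into_f_f)

lemma pos_less_pos_same_cell:
  assumes "(t, h) \<in> pts" "(t, h') \<in> pts"
  shows "pos a (t, h) < pos a (t, h') \<longleftrightarrow> (if flip a t then h' < h else h < h')"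
  using assms pos_less_pos_iff[OF assms] mirror_less_mirror_iff
  by (simp add: key_def pts_def)

lemma pos_Suc_along_path:
  assumes "Suc t < k" "h < levels"
  shows "pos (vert t) (Suc t, h) = Suc (pos (vert t) (t, h))"
proof -
  have "key (vert t) (Suc t, h) = (line (vert t) t, run_start (vert t) t, mirror levels (flip (vert t) t) h, Suc t)"
    using line_Suc[OF assms(1)] flip_Suc[of t] by (simp add: key_def)
  then show ?thesis
    unfolding pos_def using assms
    by (intro rank_Suc_if_covers[OF finite_pts inj_key])
      (auto simp: key_def pts_def dest: no_prod_between_Suc)
qed

definition block :: "bool \<Rightarrow> nat \<times> nat \<Rightarrow> nat \<times> nat" where
  "block a p = (line a (fst p), run_start a (fst p))"

lemma line_mono_key: "\<forall>p\<in>pts. \<forall>q\<in>pts. key a p < key a q \<longrightarrow> line a (fst p) \<le> line a (fst q)"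
  by (auto simp: key_def dest: less_prod_imp_fst_le)

lemma block_mono_key: "\<forall>p\<in>pts. \<forall>q\<in>pts. key a p < key a q \<longrightarrow> block a p \<le> block a q"
  by (auto simp: key_def block_def dest: less_prod_imp_prefix_le)

lemma diagram_perm: "diagram N perm = (\<lambda>p. (pos True p, pos False p)) ` pts"
proof -
  have "diagram N perm = (\<lambda>i. (i, perm i)) ` pos True ` pts"
    unfolding diagram_def using bij_betw_imp_surj_on[OF bij_betw_pos] by simp
  also have "\<dots> = (\<lambda>p. (pos True p, pos False p)) ` pts"
    unfolding image_image perm_def by (intro image_cong) (auto simp: inv_pos)
  finally show ?thesis .
qed

lemma is_perm_perm: "is_perm N perm"
  unfolding is_perm_def perm_def
  using bij_betw_trans[OF bij_betw_inv_into[OF bij_betw_pos] bij_betw_pos] by (simp add: comp_def)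

abbreviation band :: "bool \<Rightarrow> nat \<Rightarrow> nat set" where
  "band a \<equiv> rank_block pts (\<lambda>p. line a (fst p))"

lemma interval_partition_band: "interval_partition N (lines a) (band a)"
proof -
  have "\<forall>p\<in>pts. line a (fst p) < lines a"
    using line_less_lines by (auto simp: pts_def)
  then show ?thesis
    using interval_partition_rank_blocks[OF finite_pts inj_key line_mono_key] card_pts by metis
qed

lemma pos_in_band_iff: "p \<in> pts \<Longrightarrow> pos a p \<in> band a c \<longleftrightarrow> line a (fst p) = c"
  unfolding pos_def by (rule rank_in_rank_block_iff[OF finite_pts inj_key line_mono_key])

lemma cell_points:
  "diagram N perm \<inter> (band True i \<times> band False j) =
     (\<lambda>p. (pos True p, pos False p)) ` {p\<in>pts. col (fst p) = i \<and> row (fst p) = j}"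
  unfolding diagram_perm using pos_in_band_iff[of _ True i] pos_in_band_iff[of _ False j]
  by (auto simp: line_def)

lemma pos_less_pos_in_cell:
  assumes "(t, h) \<in> pts" "(t, h') \<in> pts" "pos True (t, h) < pos True (t, h')"
  shows "pos False (t, h) < pos False (t, h') \<longleftrightarrow> \<not> dec t"
proof -
  have "h \<noteq> h'"
    using assms(3) by auto
  then show ?thesis
    using assms pos_less_pos_same_cell[OF assms(1,2)] by (auto simp: flip_def)
qed

lemma cell_ok_cell: "cell_ok (M i j) (diagram N perm \<inter> (band True i \<times> band False j))"
proof -
  let ?C = "{p\<in>pts. col (fst p) = i \<and> row (fst p) = j}"
  have same_cell: "fst q = fst p" if "p \<in> ?C" "q \<in> ?C" for p q
    using that cell_unique[of "fst q" "fst p"] by (auto simp: pts_def mem_Times_iff)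
  have order: "pos False p < pos False q \<longleftrightarrow> M i j \<noteq> Dec"
    if in_C: "p \<in> ?C" "q \<in> ?C" and less: "pos True p < pos True q" for p q
  proof -
    obtain t h h' where pq: "p = (t, h)" "q = (t, h')"
      using same_cell[OF in_C] by (metis prod.collapse)
    then have "M i j = M (col t) (row t)"
      using in_C(1) by simp
    then show ?thesis
      using pos_less_pos_in_cell[of t h h'] in_C less unfolding pq by (simp add: dec_def)
  qed
  have pos_inj: "pos False p = pos False q \<Longrightarrow> p = q" if "p \<in> ?C" "q \<in> ?C" for p q
    using that bij_betw_imp_inj_on[OF bij_betw_pos] by (auto dest: inj_onD)
  show ?thesis
  proof (cases "M i j")
    case Emp
    then have "?C = {}"
      using cell_nonempty by (auto simp: pts_def)
    then show ?thesis
      unfolding cell_ok_def cell_points Emp by simp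
  next
    case Inc
    then show ?thesis
      unfolding cell_ok_def cell_points using order by auto
  next
    case Dec
    have "pos False q < pos False p" if "p \<in> ?C" "q \<in> ?C" "pos True p < pos True q" for p q
      using order[OF that] pos_inj[OF that(1,2)] that(3) Dec by (auto simp: not_less le_less)
    then show ?thesis
      unfolding cell_ok_def cell_points Dec by auto
  qed
qed

lemma perm_in_Grid: "(N, perm) \<in> Grid M kc lr"
  unfolding Grid_def gridding_def
  using is_perm_perm interval_partition_band[of True] interval_partition_band[of False] cell_ok_cell
  by (auto simp: lines_def)

definition axis_boundary :: "(nat \<times> nat) set \<Rightarrow> bool \<Rightarrow> nat set" where
  "axis_boundary S a = boundary (pos a ` S)"

definition boundaries :: "(nat \<times> nat) set \<Rightarrow> (bool \<times> nat) set" where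
  "boundaries S = (SIGMA a:UNIV. axis_boundary S a)"

definition boundary_point :: "bool \<times> nat \<Rightarrow> nat \<times> nat" where
  "boundary_point b = inv_into pts (pos (fst b)) (snd b)"

lemma finite_boundaries: "finite S \<Longrightarrow> finite (boundaries S)"
  unfolding boundaries_def axis_boundary_def by (intro finite_SigmaI finite_boundary) auto

lemma card_boundaries:
  "finite S \<Longrightarrow> card (boundaries S) = card (axis_boundary S True) + card (axis_boundary S False)"
  unfolding boundaries_def axis_boundary_def by (simp add: finite_boundary UNIV_bool)

lemma boundary_at_adjacent:
  assumes "S \<subseteq> pts" "p \<in> pts" "q \<in> pts" "pos a q = Suc (pos a p)" "(p \<in> S) \<noteq> (q \<in> S)"
  shows "(a, pos a p) \<in> boundaries S" "boundary_point (a, pos a p) = p"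
proof -
  have mem: "pos a r \<in> pos a ` S \<longleftrightarrow> r \<in> S" if "r \<in> pts" for r
    using that assms(1) bij_betw_imp_inj_on[OF bij_betw_pos] by (auto dest: inj_onD)
  have "(pos a p \<in> pos a ` S) \<noteq> (Suc (pos a p) \<in> pos a ` S)"
    using mem[OF assms(2)] mem[OF assms(3)] assms(4,5) by simp
  then show "(a, pos a p) \<in> boundaries S"
    unfolding boundaries_def axis_boundary_def boundary_def by simp
  show "boundary_point (a, pos a p) = p"
    unfolding boundary_point_def using assms(2) by (simp add: inv_pos)
qed

text \<open>
  A path cell split by S is the first cell of its run on some axis, and the points of this run
  form a block of consecutive positions on that axis; so S has a boundary inside the block.\<close>

lemma split_cell_owns_boundary:
  assumes S: "S \<subseteq> pts" and p: "(t, h) \<in> pts" "(t, h) \<in> S" and q: "(t, h') \<in> pts" "(t, h') \<notin> S"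
  shows "t \<in> (\<lambda>b. run_start (fst b) (fst (boundary_point b))) ` boundaries S"
proof -
  obtain a where a: "run_start a t = t"
    using run_start_self by blast
  define f where "f i \<longleftrightarrow> inv_into pts (pos a) i \<in> S" for i
  have "f (pos a (t, h)) \<noteq> f (pos a (t, h'))"
    using p q by (simp add: f_def inv_pos)
  then obtain i where i: "min (pos a (t, h)) (pos a (t, h')) \<le> i"
      "i < max (pos a (t, h)) (pos a (t, h'))" "f i \<noteq> f (Suc i)"
    by (rule exists_change_between)
  have "i \<in> {1..N}" "Suc i \<in> {1..N}"
    using i(1,2) bij_betw_apply[OF bij_betw_pos[of a] p(1)] bij_betw_apply[OF bij_betw_pos[of a] q(1)]
    by (auto simp: min_def max_def split: if_splits)
  then obtain u w where u: "u \<in> pts" "pos a u = i" and w: "w \<in> pts" "pos a w = Suc i"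
    using bij_betw_imp_surj_on[OF bij_betw_pos, of a] by (metis imageE)
  have "block a u = block a (t, h)"
    using mono_eq_if_rank_between[OF finite_pts inj_key block_mono_key p(1) q(1) u(1)] i u
    by (simp add: block_def pos_def)
  then have owner: "run_start a (fst u) = t"
    using a by (simp add: block_def)
  have "inv_into pts (pos a) i = u" "inv_into pts (pos a) (Suc i) = w"
    using inv_pos[OF u(1), of a] inv_pos[OF w(1), of a] u(2) w(2) by simp_all
  then have "(u \<in> S) \<noteq> (w \<in> S)"
    using i(3) unfolding f_def by simp
  then have "(a, i) \<in> boundaries S" "boundary_point (a, i) = u"
    using boundary_at_adjacent[OF S u(1) w(1), of a] u(2) w(2) by simp_all
  then show ?thesis
    using owner by (intro image_eqI[of _ _ "(a, i)"]) simp_all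
qed

lemma split_level_owns_boundary:
  assumes S: "S \<subseteq> pts" and "h < levels" "t1 < k" "(t1, h) \<in> S" "t2 < k" "(t2, h) \<notin> S"
  shows "h \<in> (\<lambda>b. snd (boundary_point b)) ` boundaries S"
proof -
  obtain t where t: "min t1 t2 \<le> t" "t < max t1 t2" "((t, h) \<in> S) \<noteq> ((Suc t, h) \<in> S)"
    using exists_change_between[of "\<lambda>t. (t, h) \<in> S" t1 t2] assms by auto
  then have "Suc t < k" "(t, h) \<in> pts" "(Suc t, h) \<in> pts"
    using assms by (auto simp: pts_def)
  from boundary_at_adjacent[OF S this(2,3) pos_Suc_along_path[OF this(1) \<open>h < levels\<close>] t(3)]
  show ?thesis
    by (metis image_eqI snd_conv)
qed

lemma many_split_levels:
  assumes S: "S \<subseteq> pts" "N \<le> 3 * card S" "3 * card S \<le> 2 * N"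
  shows "k \<le> card {h. h < levels \<and> (\<exists>t<k. ((t, h) \<in> S) \<noteq> c)}"
proof -
  define H where "H = {h. h < levels \<and> (\<exists>t<k. ((t, h) \<in> S) \<noteq> c)}"
  define Q where "Q = {p\<in>pts. (p \<in> S) \<noteq> c}"
  have "Q \<subseteq> {0..<k} \<times> H"
    unfolding Q_def H_def pts_def by auto
  then have "card Q \<le> k * card H"
    using card_mono[of "{0..<k} \<times> H" Q] by (simp add: H_def card_cartesian_product)
  moreover have "k * k \<le> card Q"
  proof (cases c)
    case True
    then have "Q = pts - S" unfolding Q_def by auto
    then show ?thesis
      using S card_Diff_subset[OF finite_subset[OF S(1) finite_pts] S(1)] card_pts
      by (simp add: N_def levels_def)
  next
    case False
    then have "Q = S" unfolding Q_def using S(1) by auto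
    then show ?thesis
      using S(2) by (simp add: N_def levels_def)
  qed
  ultimately have "k * k \<le> k * card H"
    by linarith
  then have "k \<le> card H"
    by (cases "k = 0") auto
  then show ?thesis
    unfolding H_def .
qed

lemma card_boundaries_ge:
  assumes S: "S \<subseteq> pts" "N \<le> 3 * card S" "3 * card S \<le> 2 * N"
  shows "k \<le> card (boundaries S)"
proof -
  have fin: "finite (boundaries S)"
    using finite_boundaries finite_subset[OF S(1) finite_pts] by blast
  show ?thesis
  proof (cases "\<forall>t<k. (\<exists>h<levels. (t, h) \<in> S) \<and> (\<exists>h<levels. (t, h) \<notin> S)")
    case True
    have "{0..<k} \<subseteq> (\<lambda>b. run_start (fst b) (fst (boundary_point b))) ` boundaries S"
    proof
      fix t assume "t \<in> {0..<k}"
      then obtain h h' where "h < levels" "(t, h) \<in> S" "h' < levels" "(t, h') \<notin> S"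
        using True by auto
      then show "t \<in> (\<lambda>b. run_start (fst b) (fst (boundary_point b))) ` boundaries S"
        using \<open>t \<in> {0..<k}\<close> by (intro split_cell_owns_boundary[OF S(1)]) (auto simp: pts_def)
    qed
    from surj_card_le[OF fin this] show ?thesis
      by simp
  next
    case False
    then obtain t0 where t0: "t0 < k" "(\<forall>h<levels. (t0, h) \<in> S) \<or> (\<forall>h<levels. (t0, h) \<notin> S)"
      by blast
    then obtain c where c: "\<forall>h<levels. (t0, h) \<in> S \<longleftrightarrow> c"
      by (metis (full_types))
    have "{h. h < levels \<and> (\<exists>t<k. ((t, h) \<in> S) \<noteq> c)} \<subseteq> (\<lambda>b. snd (boundary_point b)) ` boundaries S"
    proof
      fix h assume "h \<in> {h. h < levels \<and> (\<exists>t<k. ((t, h) \<in> S) \<noteq> c)}"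
      then obtain t where "h < levels" "t < k" "((t, h) \<in> S) \<noteq> c"
        by blast
      then show "h \<in> (\<lambda>b. snd (boundary_point b)) ` boundaries S"
        using split_level_owns_boundary[OF S(1), of h] t0(1) c by (cases c) auto
    qed
    from surj_card_le[OF fin this] show ?thesis
      using many_split_levels[OF S, of c] by linarith
  qed
qed

lemma grid_tree_width_bound:
  assumes T: "is_grid_tree N perm T"
  shows "k \<le> 4 * tree_grid_width T"
proof (cases "k = 0")
  case False
  define pt where "pt p = (pos True p, pos False p)" for p
  have inj_pt: "inj_on pt pts"
    using bij_betw_imp_inj_on[OF bij_betw_pos] unfolding pt_def inj_on_def by auto
  have leaves: "distinct (leaves T)" "set (leaves T) = pt ` pts"
    using T unfolding is_grid_tree_def diagram_perm pt_def by auto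
  then have "length (leaves T) = N"
    using distinct_card card_image[OF inj_pt] card_pts by metis
  moreover have "3 \<le> N"
    using False by (simp add: N_def levels_def)
  ultimately obtain S where S: "S \<in> below_sets T" "N \<le> 3 * card S" "3 * card S \<le> 2 * N"
    using exists_balanced_below_set[OF leaves(1), of N] by auto
  define S' where "S' = {p\<in>pts. pt p \<in> S}"
  have S'_pts: "S' \<subseteq> pts" and S_eq: "S = pt ` S'"
    using below_sets_subset_leaves[OF S(1)] leaves(2) unfolding S'_def by auto
  have fin: "finite S'"
    using finite_subset[OF S'_pts finite_pts] .
  have "card S = card S'"
    unfolding S_eq using inj_on_subset[OF inj_pt S'_pts] by (rule card_image)
  then have "k \<le> card (boundaries S')"
    using card_boundaries_ge[OF S'_pts] S by simp
  also have "\<dots> = card (boundary (fst ` S)) + card (boundary (snd ` S))"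
    unfolding card_boundaries[OF fin] axis_boundary_def S_eq pt_def by (simp add: image_image)
  also have "\<dots> \<le> 4 * grid_complexity S"
    using fin unfolding S_eq by (intro card_boundaries_le_grid_complexity) simp
  also have "\<dots> \<le> 4 * tree_grid_width T"
    using grid_complexity_le_tree_grid_width[OF S(1)] by simp
  finally show ?thesis .
qed simp

lemma grid_width_perm_bound: "k \<le> 4 * grid_width N perm"
proof (cases "k = 0")
  case False
  then have "(0, 0) \<in> pts"
    by (simp add: pts_def levels_def)
  then have "diagram N perm \<noteq> {}"
    unfolding diagram_perm by blast
  then obtain T where "is_grid_tree N perm T" "grid_width N perm = tree_grid_width T"
    by (rule grid_width_attained)
  then show ?thesis
    using grid_tree_width_bound by simp
qed simp

end

theorem mainTheorem4:
  fixes M :: "nat \<Rightarrow> nat \<Rightarrow> cellclass" and kc lr k :: nat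
  assumes "has_path M kc lr k"
  shows "\<exists>n \<sigma>. (n, \<sigma>) \<in> Grid M kc lr \<and> real (grid_width n \<sigma>) \<ge> real k / 4"
proof -
  obtain vs where "cell_path M kc lr k vs"
    using assms unfolding has_path_def cell_path_def by blast
  then interpret cell_path M kc lr k vs .
  have "real k / 4 \<le> real (grid_width N perm)"
    using grid_width_perm_bound by linarith
  then show ?thesis
    using perm_in_Grid by blast
qed

end
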